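(* Let $p$ be an integer with $|p|>1$ and let $G=\mathbb{Z}[1/p]\rtimes\mathbb{Z}$ with multiplication $(f_1,c_1)(f_2,c_2)=(f_1+p^{-c_1}f_2,\,c_1+c_2)$. Let $C=\{(f_i,c_i)\}$ be a finite generating set of $G$ closed under inverses, let $c=\max\{c_i\mid (f_i,c_i)\in C\}$, and let $d_C$ be the word metric on $G$ with respect to $C$. Then there is a constant $M$ (depending on $p$ and $C$) such that for every $r\ge 0$ and all $h=(f,0)$, $h'=(f',0)$ in the subgroup $\mathbb{Z}[1/p]\times\{0\}\subset G$ with $d_C(h,h')\le r$, we have $\big||f|-|f'|\big|\le M|p|^{rc/2}$ and $|\mathrm{denom}(f)-\mathrm{denom}(f')|\le M|p|^{rc/2}$.
   Context: $G$ is isomorphic to the Baumslag-Solitar group $B_{1,p}=\langle a,t\mid t^{-1}at=a^p\rangle$. The word metric is $d_C(g,g')=$ the least number of elements of $C$ whose product equals $g^{-1}g'$. For $f\in\mathbb{Z}[1/p]$, $|f|$ is its usual absolute value, and $\mathrm{denom}(f)$ is $|p|^{n}$ where $n\ge 0$ is the least nonnegative integer such that $f=m/p^{n}$ for some integer $m$. *)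

theory Defs
  imports Complex_Main
begin

definition Zinvp :: "int \<Rightarrow> rat set" where
  "Zinvp p = {q. \<exists>m::int. \<exists>n::nat. q = of_int m / (of_int p) ^ n}"

definition BScarrier :: "int \<Rightarrow> (rat \<times> int) set" where
  "BScarrier p = Zinvp p \<times> UNIV"

definition BSmult :: "int \<Rightarrow> rat \<times> int \<Rightarrow> rat \<times> int \<Rightarrow> rat \<times> int" where
  "BSmult p g h = (fst g + ((of_int p) powi (- snd g)) * fst h, snd g + snd h)"

definition BSinv :: "int \<Rightarrow> rat \<times> int \<Rightarrow> rat \<times> int" where
  "BSinv p g = (- (((of_int p) powi (snd g)) * fst g), - snd g)"

definition BSone :: "rat \<times> int" where
  "BSone = (0, 0)"

definition BSprod :: "int \<Rightarrow> (rat \<times> int) list \<Rightarrow> rat \<times> int" where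
  "BSprod p xs = foldr (BSmult p) xs BSone"

text \<open>C generates G (as a monoid, C being closed under inverses).\<close>
definition BSgenerates :: "int \<Rightarrow> (rat \<times> int) set \<Rightarrow> bool" where
  "BSgenerates p C \<longleftrightarrow> (\<forall>g \<in> BScarrier p. \<exists>xs. set xs \<subseteq> C \<and> BSprod p xs = g)"

definition word_dist :: "int \<Rightarrow> (rat \<times> int) set \<Rightarrow> rat \<times> int \<Rightarrow> rat \<times> int \<Rightarrow> nat" where
  "word_dist p C g g' =
     (LEAST k. \<exists>xs. length xs = k \<and> set xs \<subseteq> C \<and> BSprod p xs = BSmult p (BSinv p g) g')"

definition denomp :: "int \<Rightarrow> rat \<Rightarrow> int" where
  "denomp p f = \<bar>p\<bar> ^ (LEAST n. \<exists>m::int. f = of_int m / (of_int p) ^ n)"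

end

theory Submission
  imports Defs
begin

(*
  Let w be a shortest word over C representing (f, 0)^-1 (f', 0) = (f' - f, 0), of length n <= r,
  and cut it into halves w = u v.  The exponents of w sum to 0, so f' - f is the difference of the
  first coordinates of u and of v^-1, and v^-1 is again a word over C because C is closed under
  inverses.  Both u and v^-1 have length k <= (n + 1) / 2.  Along a word of length k the exponent
  of p stays within [-c k, c k], so its first coordinate has absolute value O(|p|^(c k)) and lies
  in p^-(E + c k) Z, where p^-E Z contains the first coordinates of all generators.  Hence |f - f'|
  and the difference of the denominators are both O(|p|^(c k)) = O(|p|^(r c / 2)).
*)

lemma BSmult_assoc:
  assumes "p \<noteq> 0"
  shows "BSmult p (BSmult p g h) k = BSmult p g (BSmult p h k)"
  using assms by (simp add: BSmult_def power_int_diff algebra_simps flip: power_int_add)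

lemma BSmult_BSone [simp]: "BSmult p g BSone = g"
  by (simp add: BSmult_def BSone_def)

lemma BSinv_BSone [simp]: "BSinv p BSone = BSone"
  by (simp add: BSinv_def BSone_def)

lemma BSinv_BSmult:
  assumes "p \<noteq> 0"
  shows "BSinv p (BSmult p g h) = BSmult p (BSinv p h) (BSinv p g)"
  using assms by (simp add: BSinv_def BSmult_def algebra_simps flip: power_int_add)

lemma BSprod_append:
  assumes "p \<noteq> 0"
  shows "BSprod p (xs @ ys) = BSmult p (BSprod p xs) (BSprod p ys)"
proof (induction xs)
  case (Cons x xs)
  then show ?case by (simp add: BSprod_def BSmult_assoc[OF assms])
qed (simp add: BSprod_def BSmult_def BSone_def)

lemma BSinv_BSprod:
  assumes "p \<noteq> 0"
  shows "BSinv p (BSprod p xs) = BSprod p (rev (map (BSinv p) xs))"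
proof (induction xs)
  case Nil
  then show ?case by (simp add: BSprod_def)
next
  case (Cons x xs)
  have "BSinv p (BSprod p (x # xs)) = BSmult p (BSinv p (BSprod p xs)) (BSinv p x)"
    by (simp add: BSprod_def BSinv_BSmult[OF assms])
  also have "\<dots> = BSprod p (rev (map (BSinv p) (x # xs)))"
    by (simp add: Cons BSprod_append[OF assms]) (simp add: BSprod_def)
  finally show ?case .
qed

lemma snd_BSprod: "snd (BSprod p xs) = sum_list (map snd xs)"
  by (induction xs) (simp_all add: BSprod_def BSmult_def BSone_def)

lemma fst_BSprod_Cons:
  "fst (BSprod p (x # xs)) = fst x + of_int p powi (- snd x) * fst (BSprod p xs)"
  by (simp add: BSprod_def BSmult_def)

lemma fst_BSmult_eq_diff:
  assumes "snd (BSmult p u v) = 0"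
  shows "fst (BSmult p u v) = fst u - fst (BSinv p v)"
proof -
  have "- snd u = snd v"
    using assms by (simp add: BSmult_def)
  then show ?thesis
    by (simp add: BSmult_def BSinv_def)
qed

definition Zinvp_level :: "int \<Rightarrow> nat \<Rightarrow> rat set" where
  "Zinvp_level p n = {q. \<exists>m::int. q = of_int m / of_int p ^ n}"

lemma Zinvp_eq_UN_Zinvp_level: "Zinvp p = (\<Union>n. Zinvp_level p n)"
  by (auto simp: Zinvp_def Zinvp_level_def)

lemma denomp_eq_Least_Zinvp_level: "denomp p f = \<bar>p\<bar> ^ (LEAST n. f \<in> Zinvp_level p n)"
  by (simp add: denomp_def Zinvp_level_def)

lemma Zinvp_level_iff:
  assumes "p \<noteq> 0"
  shows "f \<in> Zinvp_level p n \<longleftrightarrow> of_int p ^ n * f \<in> \<int>"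
  using assms by (auto simp: Zinvp_level_def Ints_def field_simps)

lemma Zinvp_level_uminus:
  assumes "p \<noteq> 0" "f \<in> Zinvp_level p n"
  shows "- f \<in> Zinvp_level p n"
  using assms by (simp add: Zinvp_level_iff)

lemma Zinvp_level_add:
  assumes "p \<noteq> 0" "f \<in> Zinvp_level p n" "g \<in> Zinvp_level p n"
  shows "f + g \<in> Zinvp_level p n"
  using assms by (simp add: Zinvp_level_iff distrib_left Ints_add)

lemma Zinvp_level_diff:
  assumes "p \<noteq> 0" "f \<in> Zinvp_level p n" "g \<in> Zinvp_level p n"
  shows "f - g \<in> Zinvp_level p n"
  using assms by (simp add: Zinvp_level_iff right_diff_distrib Ints_diff)

lemma Zinvp_level_mono:
  assumes "p \<noteq> 0" "n \<le> n'" "f \<in> Zinvp_level p n"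
  shows "f \<in> Zinvp_level p n'"
proof -
  have "of_int p ^ n' * f = of_int (p ^ (n' - n)) * (of_int p ^ n * f)"
    using assms(2) by (simp flip: power_add)
  then show ?thesis
    using assms(3) unfolding Zinvp_level_iff[OF assms(1)] by (metis Ints_mult Ints_of_int)
qed

lemma Zinvp_level_power_int:
  assumes "p \<noteq> 0" "f \<in> Zinvp_level p n"
  shows "of_int p powi s * f \<in> Zinvp_level p (n + nat (- s))"
proof -
  have "of_int p ^ (n + nat (- s)) * (of_int p powi s * f)
      = of_int (p ^ nat (max s 0)) * (of_int p ^ n * f)"
    using assms(1) by (simp add: power_add power_int_def field_simps)
  then show ?thesis
    using assms(2) unfolding Zinvp_level_iff[OF assms(1)] by (metis Ints_mult Ints_of_int)
qed

lemma Zinvp_diff: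
  assumes "p \<noteq> 0" "f \<in> Zinvp p" "f' \<in> Zinvp p"
  shows "f - f' \<in> Zinvp p"
proof -
  obtain a b where "f \<in> Zinvp_level p a" "f' \<in> Zinvp_level p b"
    using assms by (auto simp: Zinvp_eq_UN_Zinvp_level)
  then have "f \<in> Zinvp_level p (max a b)" "f' \<in> Zinvp_level p (max a b)"
    using Zinvp_level_mono[OF assms(1) max.cobounded1] Zinvp_level_mono[OF assms(1) max.cobounded2]
    by auto
  then have "f - f' \<in> Zinvp_level p (max a b)"
    using assms(1) by (intro Zinvp_level_diff)
  then show ?thesis
    by (auto simp: Zinvp_eq_UN_Zinvp_level)
qed

lemma Zinvp_level_Least:
  assumes "f \<in> Zinvp p"
  shows "f \<in> Zinvp_level p (LEAST n. f \<in> Zinvp_level p n)"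
  using assms by (auto simp: Zinvp_eq_UN_Zinvp_level intro: LeastI)

lemma Least_Zinvp_level_le_max:
  assumes "p \<noteq> 0" "f \<in> Zinvp p" "f - f' \<in> Zinvp_level p N"
  shows "(LEAST n. f' \<in> Zinvp_level p n) \<le> max (LEAST n. f \<in> Zinvp_level p n) N"
proof (rule Least_le)
  have "f \<in> Zinvp_level p (max (LEAST n. f \<in> Zinvp_level p n) N)"
    using Zinvp_level_mono[OF assms(1) max.cobounded1 Zinvp_level_Least[OF assms(2)]] .
  moreover have "f - f' \<in> Zinvp_level p (max (LEAST n. f \<in> Zinvp_level p n) N)"
    using Zinvp_level_mono[OF assms(1) max.cobounded2 assms(3)] .
  ultimately have "f - (f - f') \<in> Zinvp_level p (max (LEAST n. f \<in> Zinvp_level p n) N)"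
    by (rule Zinvp_level_diff[OF assms(1)])
  then show "f' \<in> Zinvp_level p (max (LEAST n. f \<in> Zinvp_level p n) N)"
    by simp
qed

lemma denomp_diff_le:
  assumes p: "\<bar>p\<bar> > 1" and "f \<in> Zinvp p" "f' \<in> Zinvp p" "f - f' \<in> Zinvp_level p N"
  shows "\<bar>denomp p f - denomp p f'\<bar> \<le> \<bar>p\<bar> ^ N"
proof -
  define a where "a = (LEAST n. f \<in> Zinvp_level p n)"
  define b where "b = (LEAST n. f' \<in> Zinvp_level p n)"
  have p0: "p \<noteq> 0" using p by auto
  have "f' - f \<in> Zinvp_level p N"
    using Zinvp_level_uminus[OF p0 assms(4)] by simp
  then have "b \<le> max a N" "a \<le> max b N"
    unfolding a_def b_def using Least_Zinvp_level_le_max p0 assms(2-4) by blast+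
  then consider "a = b" | "max a b \<le> N" by linarith
  then show ?thesis
  proof cases
    case 2
    have "\<bar>\<bar>p\<bar> ^ a - \<bar>p\<bar> ^ b\<bar> \<le> \<bar>p\<bar> ^ max a b"
      using p by (auto simp: max_def abs_if power_increasing)
    also have "\<dots> \<le> \<bar>p\<bar> ^ N"
      using p 2 by (simp add: power_increasing)
    finally show ?thesis
      unfolding denomp_eq_Least_Zinvp_level a_def b_def .
  qed (simp add: denomp_eq_Least_Zinvp_level a_def b_def)
qed

lemma abs_power_int_le:
  fixes x :: "'a::linordered_field"
  assumes "1 \<le> \<bar>x\<bar>" "\<bar>s\<bar> \<le> int c"
  shows "\<bar>x powi s\<bar> \<le> \<bar>x\<bar> ^ c"
proof -
  have "\<bar>x powi s\<bar> = \<bar>x\<bar> powi s"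
    by (simp add: power_int_abs)
  also have "\<dots> \<le> \<bar>x\<bar> powi int c"
    using assms by (intro power_int_increasing) auto
  finally show ?thesis
    by simp
qed

lemma abs_fst_BSprod_le:
  fixes A :: rat and c :: nat
  assumes q: "2 \<le> \<bar>p\<bar> ^ c" and A: "\<forall>x\<in>C. \<bar>fst x\<bar> \<le> A"
    and c: "\<forall>x\<in>C. \<bar>snd x\<bar> \<le> int c" and "set xs \<subseteq> C"
  shows "\<bar>fst (BSprod p xs)\<bar> \<le> A * ((of_int \<bar>p\<bar> ^ c) ^ length xs - 1)"
  using \<open>set xs \<subseteq> C\<close>
proof (induction xs)
  case Nil
  then show ?case
    by (simp add: BSprod_def BSone_def)
next
  case (Cons x xs)
  define Q where "Q = (of_int \<bar>p\<bar> ^ c :: rat)"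
  have Q2: "2 \<le> Q"
    unfolding Q_def using q by (metis of_int_abs of_int_le_iff of_int_numeral of_int_power)
  have "p \<noteq> 0"
    using q by (cases c) auto
  then have "\<bar>of_int p powi (- snd x) :: rat\<bar> \<le> Q"
    unfolding Q_def using c Cons.prems by (intro order_trans[OF abs_power_int_le]) auto
  moreover have "\<bar>fst (BSprod p xs)\<bar> \<le> A * (Q ^ length xs - 1)"
    using Cons unfolding Q_def by auto
  ultimately have "\<bar>of_int p powi (- snd x) * fst (BSprod p xs)\<bar> \<le> Q * (A * (Q ^ length xs - 1))"
    unfolding abs_mult using Q2 by (intro mult_mono) auto
  moreover have "\<bar>fst x\<bar> \<le> A"
    using A Cons.prems by auto
  ultimately have "\<bar>fst (BSprod p (x # xs))\<bar> \<le> A + Q * (A * (Q ^ length xs - 1))"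
    unfolding fst_BSprod_Cons by (intro order_trans[OF abs_triangle_ineq] add_mono)
  also have "\<dots> \<le> A * (Q ^ length (x # xs) - 1)"
  proof -
    have "A * 2 \<le> A * Q"
      using Q2 \<open>\<bar>fst x\<bar> \<le> A\<close> by (intro mult_left_mono) auto
    then show ?thesis
      by (simp add: algebra_simps)
  qed
  finally show ?case
    unfolding Q_def .
qed

lemma fst_BSprod_in_Zinvp_level:
  assumes p: "p \<noteq> 0" and E: "\<forall>x\<in>C. fst x \<in> Zinvp_level p E"
    and c: "\<forall>x\<in>C. \<bar>snd x\<bar> \<le> int c" and "set xs \<subseteq> C"
  shows "fst (BSprod p xs) \<in> Zinvp_level p (E + c * length xs)"
  using \<open>set xs \<subseteq> C\<close>
proof (induction xs)
  case Nil
  then show ?case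
    by (simp add: BSprod_def BSone_def Zinvp_level_def)
next
  case (Cons x xs)
  have "of_int p powi (- snd x) * fst (BSprod p xs)
      \<in> Zinvp_level p (E + c * length xs + nat (- (- snd x)))"
    using Cons by (intro Zinvp_level_power_int p) auto
  moreover have "E + c * length xs + nat (snd x) \<le> E + c * length (x # xs)"
    using c Cons.prems by auto
  moreover have "fst x \<in> Zinvp_level p E"
    using E Cons.prems by auto
  ultimately show ?case
    unfolding fst_BSprod_Cons
    by (intro Zinvp_level_add p Zinvp_level_mono[OF p, of _ "E + c * length (x # xs)"]) auto
qed

lemma horizontal_word_split:
  assumes p: "p \<noteq> 0" and inv: "\<forall>x\<in>C. BSinv p x \<in> C"
    and xs: "set xs \<subseteq> C" "BSprod p xs = (f, 0)"
  obtains us ws where "set us \<subseteq> C" "set ws \<subseteq> C"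
    "length us \<le> (length xs + 1) div 2" "length ws \<le> (length xs + 1) div 2"
    "f = fst (BSprod p us) - fst (BSprod p ws)"
proof -
  define us where "us = take (length xs div 2) xs"
  define vs where "vs = drop (length xs div 2) xs"
  have "BSprod p xs = BSmult p (BSprod p us) (BSprod p vs)"
    unfolding us_def vs_def by (simp flip: BSprod_append[OF p])
  then have "fst (BSprod p xs) = fst (BSprod p us) - fst (BSprod p (rev (map (BSinv p) vs)))"
    using xs(2) fst_BSmult_eq_diff by (metis BSinv_BSprod[OF p] snd_conv)
  moreover have "set us \<subseteq> C" "set (rev (map (BSinv p) vs)) \<subseteq> C"
    using xs(1) inv set_take_subset set_drop_subset unfolding us_def vs_def by fastforce+
  ultimately show ?thesis
    using that[of us "rev (map (BSinv p) vs)"] xs(2) by (simp add: us_def vs_def)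
qed

lemma word_dist_attained:
  assumes "BSgenerates p C" "BSmult p (BSinv p g) g' \<in> BScarrier p"
  obtains xs where "length xs = word_dist p C g g'" "set xs \<subseteq> C"
    "BSprod p xs = BSmult p (BSinv p g) g'"
proof -
  have "\<exists>k xs. length xs = k \<and> set xs \<subseteq> C \<and> BSprod p xs = BSmult p (BSinv p g) g'"
    using assms unfolding BSgenerates_def by blast
  then have "\<exists>xs. length xs = word_dist p C g g' \<and> set xs \<subseteq> C
      \<and> BSprod p xs = BSmult p (BSinv p g) g'"
    unfolding word_dist_def by (rule LeastI_ex)
  then show ?thesis
    using that by blast
qed

lemma horizontal_dist_bounds:
  fixes A :: rat and c :: nat
  assumes p: "\<bar>p\<bar> > 1" and c1: "1 \<le> c"
    and inv: "\<forall>x\<in>C. BSinv p x \<in> C" and gen: "BSgenerates p C"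
    and A0: "0 \<le> A" and A: "\<forall>x\<in>C. \<bar>fst x\<bar> \<le> A" and c: "\<forall>x\<in>C. \<bar>snd x\<bar> \<le> int c"
    and E: "\<forall>x\<in>C. fst x \<in> Zinvp_level p E"
    and f: "f \<in> Zinvp p" "f' \<in> Zinvp p"
    and k: "k = (word_dist p C (f, 0) (f', 0) + 1) div 2"
  shows "\<bar>f - f'\<bar> \<le> 2 * A * of_int \<bar>p\<bar> ^ (c * k)"
    and "\<bar>denomp p f - denomp p f'\<bar> \<le> \<bar>p\<bar> ^ (E + c * k)"
proof -
  have p0: "p \<noteq> 0"
    using p by auto
  have "BSmult p (BSinv p (f, 0)) (f', 0) = (f' - f, 0)"
    by (simp add: BSmult_def BSinv_def)
  moreover have "(f' - f, 0) \<in> BScarrier p"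
    using Zinvp_diff[OF p0 f(2,1)] by (simp add: BScarrier_def)
  ultimately obtain xs where xs: "set xs \<subseteq> C" "BSprod p xs = (f' - f, 0)"
    and "length xs = word_dist p C (f, 0) (f', 0)"
    using word_dist_attained[OF gen, of "(f, 0)" "(f', 0)"] by auto
  then have k_xs: "k = (length xs + 1) div 2"
    using k by simp
  obtain us ws where us: "set us \<subseteq> C" "length us \<le> k"
    and ws: "set ws \<subseteq> C" "length ws \<le> k"
    and "f' - f = fst (BSprod p us) - fst (BSprod p ws)"
    by (rule horizontal_word_split[OF p0 inv xs]) (auto simp: k_xs)
  then have diff: "f - f' = fst (BSprod p ws) - fst (BSprod p us)"
    by simp
  have "2 \<le> \<bar>p\<bar>"
    using p by simp
  also have "\<bar>p\<bar> \<le> \<bar>p\<bar> ^ c"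
    using p c1 by (intro self_le_power) auto
  finally have "2 \<le> \<bar>p\<bar> ^ c" .
  have bound: "\<bar>fst (BSprod p vs)\<bar> \<le> A * of_int \<bar>p\<bar> ^ (c * k)"
    and level: "fst (BSprod p vs) \<in> Zinvp_level p (E + c * k)"
    if "set vs \<subseteq> C" "length vs \<le> k" for vs
  proof -
    have "\<bar>fst (BSprod p vs)\<bar> \<le> A * ((of_int \<bar>p\<bar> ^ c) ^ length vs - 1)"
      using abs_fst_BSprod_le \<open>2 \<le> \<bar>p\<bar> ^ c\<close> A c that(1) by blast
    also have "\<dots> \<le> A * of_int \<bar>p\<bar> ^ (c * k)"
    proof (intro mult_left_mono A0)
      have "(of_int \<bar>p\<bar> :: rat) ^ (c * length vs) \<le> of_int \<bar>p\<bar> ^ (c * k)"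
        using that(2) p by (intro power_increasing) auto
      then show "(of_int \<bar>p\<bar> ^ c) ^ length vs - 1 \<le> (of_int \<bar>p\<bar> ^ (c * k) :: rat)"
        by (simp add: power_mult)
    qed
    finally show "\<bar>fst (BSprod p vs)\<bar> \<le> A * of_int \<bar>p\<bar> ^ (c * k)" .
    show "fst (BSprod p vs) \<in> Zinvp_level p (E + c * k)"
      by (rule Zinvp_level_mono[OF p0 _ fst_BSprod_in_Zinvp_level[OF p0 E c that(1)]])
        (simp add: that(2))
  qed
  show "\<bar>f - f'\<bar> \<le> 2 * A * of_int \<bar>p\<bar> ^ (c * k)"
    unfolding diff using bound[OF us] bound[OF ws] by linarith
  have "f - f' \<in> Zinvp_level p (E + c * k)"
    unfolding diff using level[OF us] level[OF ws] by (intro Zinvp_level_diff p0)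
  then show "\<bar>denomp p f - denomp p f'\<bar> \<le> \<bar>p\<bar> ^ (E + c * k)"
    using denomp_diff_le p f by blast
qed

lemma power_le_powr_half:
  fixes P r :: real
  assumes "1 \<le> P" "real n \<le> r"
  shows "P ^ (c * ((n + 1) div 2)) \<le> P powr (real c / 2) * P powr (r * real c / 2)"
proof -
  have "real (2 * ((n + 1) div 2)) \<le> real (n + 1)"
    by (simp only: of_nat_le_iff)
  then have "real ((n + 1) div 2) \<le> (r + 1) / 2"
    using assms(2) by simp
  then have "real (c * ((n + 1) div 2)) \<le> real c * ((r + 1) / 2)"
    unfolding of_nat_mult by (rule mult_left_mono) simp
  then have "P ^ (c * ((n + 1) div 2)) \<le> P powr (real c * ((r + 1) / 2))"
    using assms(1) by (simp add: powr_realpow[symmetric] powr_mono)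
  also have "\<dots> = P powr (real c / 2) * P powr (r * real c / 2)"
    by (simp add: powr_add[symmetric] algebra_simps add_divide_distrib)
  finally show ?thesis .
qed

lemma horizontal_dist_bounds_powr:
  fixes A :: rat and c :: nat
  assumes p: "\<bar>p\<bar> > 1" and c1: "1 \<le> c"
    and inv: "\<forall>x\<in>C. BSinv p x \<in> C" and gen: "BSgenerates p C"
    and A0: "0 \<le> A" and A: "\<forall>x\<in>C. \<bar>fst x\<bar> \<le> A" and c: "\<forall>x\<in>C. \<bar>snd x\<bar> \<le> int c"
    and E: "\<forall>x\<in>C. fst x \<in> Zinvp_level p E"
    and f: "f \<in> Zinvp p" "f' \<in> Zinvp p"
    and r: "real (word_dist p C (f, 0) (f', 0)) \<le> r"
    and P: "P = real_of_int \<bar>p\<bar>"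
    and B: "B = P powr (real c / 2) * P powr (r * real c / 2)"
  shows "\<bar>\<bar>real_of_rat f\<bar> - \<bar>real_of_rat f'\<bar>\<bar> \<le> 2 * real_of_rat A * B"
    and "\<bar>real_of_int (denomp p f) - real_of_int (denomp p f')\<bar> \<le> P ^ E * B"
proof -
  define k where "k = (word_dist p C (f, 0) (f', 0) + 1) div 2"
  note bounds = horizontal_dist_bounds[OF p c1 inv gen A0 A c E f k_def]
  have P1: "1 \<le> P"
    using p P by simp
  have Pk: "P ^ (c * k) \<le> B"
    unfolding k_def B using power_le_powr_half[OF P1 r] .
  have "\<bar>\<bar>real_of_rat f\<bar> - \<bar>real_of_rat f'\<bar>\<bar> \<le> \<bar>real_of_rat f - real_of_rat f'\<bar>"
    by (rule abs_triangle_ineq3)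
  also have "\<dots> = real_of_rat \<bar>f - f'\<bar>"
    by (simp flip: of_rat_diff)
  also have "\<dots> \<le> real_of_rat (2 * A * of_int \<bar>p\<bar> ^ (c * k))"
    using bounds(1) by (simp only: of_rat_less_eq)
  also have "\<dots> = 2 * real_of_rat A * P ^ (c * k)"
    unfolding P by (simp del: of_int_abs add: of_rat_mult of_rat_power)
  also have "\<dots> \<le> 2 * real_of_rat A * B"
    using Pk A0 by (intro mult_left_mono) auto
  finally show "\<bar>\<bar>real_of_rat f\<bar> - \<bar>real_of_rat f'\<bar>\<bar> \<le> 2 * real_of_rat A * B" .
  have "\<bar>real_of_int (denomp p f) - real_of_int (denomp p f')\<bar> \<le> P ^ E * P ^ (c * k)"
    using bounds(2) unfolding P by (simp flip: of_int_diff of_int_abs power_add of_int_le_iff)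
  also have "\<dots> \<le> P ^ E * B"
    using Pk P1 by (intro mult_left_mono) auto
  finally show "\<bar>real_of_int (denomp p f) - real_of_int (denomp p f')\<bar> \<le> P ^ E * B" .
qed

lemma Max_snd_ge_1:
  assumes "finite C" "BSgenerates p C"
  shows "1 \<le> Max (snd ` C)"
proof -
  have "(0, 1) \<in> BScarrier p"
    by (auto simp: BScarrier_def Zinvp_def intro: exI[of _ 0])
  then obtain xs where xs: "set xs \<subseteq> C" "BSprod p xs = (0, 1)"
    using assms(2) unfolding BSgenerates_def by blast
  then have "sum_list (map snd xs) = 1"
    by (metis snd_BSprod snd_conv)
  then obtain x where "x \<in> set xs" "1 \<le> snd x"
    using sum_list_nonpos[of "map snd xs"] by fastforce
  then show ?thesis
    using xs(1) assms(1) by (meson Max_ge finite_imageI image_eqI order_trans subsetD)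
qed

lemma abs_snd_le_Max:
  assumes "finite C" "\<forall>x\<in>C. BSinv p x \<in> C" "x \<in> C"
  shows "\<bar>snd x\<bar> \<le> Max (snd ` C)"
proof -
  have "snd x \<le> Max (snd ` C)" "snd (BSinv p x) \<le> Max (snd ` C)"
    using assms by auto
  then show ?thesis
    by (simp add: BSinv_def)
qed

lemma finite_subset_BScarrier_bounds:
  assumes "p \<noteq> 0" "finite C" "C \<subseteq> BScarrier p"
  obtains A E where "0 \<le> A" "\<forall>x\<in>C. \<bar>fst x\<bar> \<le> A" "\<forall>x\<in>C. fst x \<in> Zinvp_level p E"
proof
  show "0 \<le> (\<Sum>x\<in>C. \<bar>fst x\<bar>)" "\<forall>x\<in>C. \<bar>fst x\<bar> \<le> (\<Sum>x\<in>C. \<bar>fst x\<bar>)"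
    using assms(2) by (auto intro: sum_nonneg member_le_sum)
  show "\<forall>x\<in>C. fst x \<in> Zinvp_level p (\<Sum>x\<in>C. LEAST n. fst x \<in> Zinvp_level p n)"
  proof
    fix x assume "x \<in> C"
    then have "fst x \<in> Zinvp_level p (LEAST n. fst x \<in> Zinvp_level p n)"
      using assms(3) by (intro Zinvp_level_Least) (auto simp: BScarrier_def)
    moreover have "(LEAST n. fst x \<in> Zinvp_level p n) \<le> (\<Sum>x\<in>C. LEAST n. fst x \<in> Zinvp_level p n)"
      using \<open>x \<in> C\<close> assms(2) by (intro member_le_sum) auto
    ultimately show "fst x \<in> Zinvp_level p (\<Sum>x\<in>C. LEAST n. fst x \<in> Zinvp_level p n)"
      by (rule Zinvp_level_mono[OF assms(1), rotated])
  qed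
qed

theorem lemma2:
  fixes p :: int and C :: "(rat \<times> int) set"
  assumes "\<bar>p\<bar> > 1"
    and "finite C"
    and "C \<subseteq> BScarrier p"
    and "\<forall>x \<in> C. BSinv p x \<in> C"
    and "BSgenerates p C"
  shows "\<exists>M::real. \<forall>r::real. r \<ge> 0 \<longrightarrow>
           (\<forall>f \<in> Zinvp p. \<forall>f' \<in> Zinvp p.
              real (word_dist p C (f, 0) (f', 0)) \<le> r \<longrightarrow>
                \<bar>\<bar>real_of_rat f\<bar> - \<bar>real_of_rat f'\<bar>\<bar>
                   \<le> M * real_of_int \<bar>p\<bar> powr (r * real_of_int (Max (snd ` C)) / 2)
                \<and> \<bar>real_of_int (denomp p f) - real_of_int (denomp p f')\<bar>
                   \<le> M * real_of_int \<bar>p\<bar> powr (r * real_of_int (Max (snd ` C)) / 2))"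
proof -
  define c where "c = nat (Max (snd ` C))"
  have c1: "1 \<le> c" and Max_eq: "Max (snd ` C) = int c"
    using Max_snd_ge_1[OF assms(2,5)] unfolding c_def by auto
  have c: "\<forall>x\<in>C. \<bar>snd x\<bar> \<le> int c"
    using abs_snd_le_Max[OF assms(2,4)] Max_eq by simp
  obtain A E where A: "0 \<le> A" "\<forall>x\<in>C. \<bar>fst x\<bar> \<le> A" and E: "\<forall>x\<in>C. fst x \<in> Zinvp_level p E"
    by (rule finite_subset_BScarrier_bounds[OF _ assms(2,3)]) (use assms(1) in auto)
  define P where "P = real_of_int \<bar>p\<bar>"
  define M where "M = (2 * real_of_rat A + P ^ E) * P powr (real c / 2)"
  show ?thesis
    unfolding Max_eq of_int_of_nat_eq P_def[symmetric]
  proof (intro exI[of _ M] allI impI ballI)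
    fix r :: real and f f' assume "f \<in> Zinvp p" "f' \<in> Zinvp p"
      and "real (word_dist p C (f, 0) (f', 0)) \<le> r"
    note bounds = horizontal_dist_bounds_powr[OF assms(1) c1 assms(4,5) A c E this P_def refl]
    have "0 \<le> real_of_rat A" "0 \<le> P ^ E"
      using A(1) assms(1) unfolding P_def by simp_all
    then show "\<bar>\<bar>real_of_rat f\<bar> - \<bar>real_of_rat f'\<bar>\<bar> \<le> M * P powr (r * real c / 2) \<and>
      \<bar>real_of_int (denomp p f) - real_of_int (denomp p f')\<bar> \<le> M * P powr (r * real c / 2)"
      using bounds unfolding M_def by (auto simp: algebra_simps intro: order_trans)
  qed
qed

end
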